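(* Every 5-crown is $(2P_3,C_4,C_6,C_7,\text{3-pentagon})$-free. Moreover, every 5-crown is anticonnected and contains no universal and no simplicial vertices.
   Context: Graphs are finite, simple, nonnull. A graph is $(H_1,\dots,H_m)$-free if it has no induced subgraph isomorphic to any $H_i$. $P_k$, $C_k$ are the path and cycle on $k$ vertices; $2P_3$ is two disjoint copies of $P_3$. The 3-pentagon is the graph on vertices $a,b_1,b_2,b_3,c_1,c_2,c_3$ where $a$ is adjacent to each $b_i$ and to no $c_i$, $\{b_1,b_2,b_3\}$ is stable, $\{c_1,c_2,c_3\}$ is a clique, and $b_ic_j$ is an edge iff $i=j$. A graph is anticonnected if its complement is connected. A vertex is simplicial if its neighbours form a (possibly empty) clique, universal if adjacent to all other vertices. A 5-ring is a graph $R$ whose vertex set partitions into nonempty sets $X_0,\dots,X_4$ (indices mod 5) such that each $X_i$ can be ordered $u^i_1,\dots,u^i_{|X_i|}$ with $X_i\subseteq N_R[u^i_{|X_i|}]\subseteq\dots\subseteq N_R[u^i_1]=X_{i-1}\cup X_i\cup X_{i+1}$ (closed neighbourhoods). A 5-crown is a 5-ring with such a partition $(X_0,\dots,X_4)$ for which there is $i^*\in\mathbb{Z}_5$ with $X_{i^*-1}$ complete to $X_{i^*-2}$ and $X_{i^*+1}$ complete to $X_{i^*+2}$ (a set $X$ is complete to $Y$ if every vertex of $X$ is adjacent to every vertex of $Y$). *)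

theory Defs
  imports Main
begin

definition graph :: "'a set \<Rightarrow> ('a \<Rightarrow> 'a \<Rightarrow> bool) \<Rightarrow> bool" where
  "graph V E \<longleftrightarrow> finite V \<and> V \<noteq> {} \<and>
     (\<forall>x y. E x y \<longrightarrow> x \<in> V \<and> y \<in> V) \<and>
     (\<forall>x y. E x y \<longrightarrow> E y x) \<and> (\<forall>x. \<not> E x x)"

definition contains_induced ::
  "'a set \<Rightarrow> ('a \<Rightarrow> 'a \<Rightarrow> bool) \<Rightarrow> 'b set \<Rightarrow> ('b \<Rightarrow> 'b \<Rightarrow> bool) \<Rightarrow> bool" where
  "contains_induced V E W F \<longleftrightarrow>
     (\<exists>f. inj_on f W \<and> f ` W \<subseteq> V \<and> (\<forall>x\<in>W. \<forall>y\<in>W. F x y \<longleftrightarrow> E (f x) (f y)))"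

definition H_free ::
  "'a set \<Rightarrow> ('a \<Rightarrow> 'a \<Rightarrow> bool) \<Rightarrow> 'b set \<Rightarrow> ('b \<Rightarrow> 'b \<Rightarrow> bool) \<Rightarrow> bool" where
  "H_free V E W F \<longleftrightarrow> \<not> contains_induced V E W F"

definition cycle_V :: "nat \<Rightarrow> nat set" where "cycle_V k = {0..<k}"
definition cycle_E :: "nat \<Rightarrow> nat \<Rightarrow> nat \<Rightarrow> bool" where
  "cycle_E k x y \<longleftrightarrow> x < k \<and> y < k \<and> (y = (x + 1) mod k \<or> x = (y + 1) mod k)"

definition twoP3_V :: "nat set" where "twoP3_V = {0..<6}"
definition twoP3_E :: "nat \<Rightarrow> nat \<Rightarrow> bool" where
  "twoP3_E x y \<longleftrightarrow> {x, y} \<in> {{0,1},{1,2},{3,4},{4,5}}"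

text \<open>3-pentagon: a = 0, b_i = i (i=1,2,3), c_i = i+3.\<close>
definition pent3_V :: "nat set" where "pent3_V = {0..<7}"
definition pent3_E :: "nat \<Rightarrow> nat \<Rightarrow> bool" where
  "pent3_E x y \<longleftrightarrow> {x, y} \<in> {{0,1},{0,2},{0,3},{4,5},{4,6},{5,6},{1,4},{2,5},{3,6}}"

definition closed_nbhd :: "'a set \<Rightarrow> ('a \<Rightarrow> 'a \<Rightarrow> bool) \<Rightarrow> 'a \<Rightarrow> 'a set" where
  "closed_nbhd V E v = {u \<in> V. u = v \<or> E v u}"

definition connected_graph :: "'a set \<Rightarrow> ('a \<Rightarrow> 'a \<Rightarrow> bool) \<Rightarrow> bool" where
  "connected_graph V E \<longleftrightarrow> (\<forall>x\<in>V. \<forall>y\<in>V. (\<lambda>a b. a \<in> V \<and> b \<in> V \<and> E a b)\<^sup>*\<^sup>* x y)"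

definition complement :: "'a set \<Rightarrow> ('a \<Rightarrow> 'a \<Rightarrow> bool) \<Rightarrow> 'a \<Rightarrow> 'a \<Rightarrow> bool" where
  "complement V E x y \<longleftrightarrow> x \<in> V \<and> y \<in> V \<and> x \<noteq> y \<and> \<not> E x y"

definition anticonnected :: "'a set \<Rightarrow> ('a \<Rightarrow> 'a \<Rightarrow> bool) \<Rightarrow> bool" where
  "anticonnected V E \<longleftrightarrow> connected_graph V (complement V E)"

definition universal :: "'a set \<Rightarrow> ('a \<Rightarrow> 'a \<Rightarrow> bool) \<Rightarrow> 'a \<Rightarrow> bool" where
  "universal V E v \<longleftrightarrow> v \<in> V \<and> (\<forall>u\<in>V. u \<noteq> v \<longrightarrow> E v u)"

definition simplicial :: "'a set \<Rightarrow> ('a \<Rightarrow> 'a \<Rightarrow> bool) \<Rightarrow> 'a \<Rightarrow> bool" where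
  "simplicial V E v \<longleftrightarrow> v \<in> V \<and>
     (\<forall>x\<in>V. \<forall>y\<in>V. E v x \<and> E v y \<and> x \<noteq> y \<longrightarrow> E x y)"

definition complete_to :: "('a \<Rightarrow> 'a \<Rightarrow> bool) \<Rightarrow> 'a set \<Rightarrow> 'a set \<Rightarrow> bool" where
  "complete_to E A B \<longleftrightarrow> (\<forall>x\<in>A. \<forall>y\<in>B. E x y)"

text \<open>(X 0,...,X 4) is a 5-ring partition of G (indices mod 5; X i - 1 = X ((i+4) mod 5)).\<close>
definition five_ring_partition :: "'a set \<Rightarrow> ('a \<Rightarrow> 'a \<Rightarrow> bool) \<Rightarrow> (nat \<Rightarrow> 'a set) \<Rightarrow> bool" where
  "five_ring_partition V E X \<longleftrightarrow>
     (\<forall>i<5. X i \<noteq> {}) \<and> (\<Union>i<5. X i) = V \<and>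
     (\<forall>i<5. \<forall>j<5. i \<noteq> j \<longrightarrow> X i \<inter> X j = {}) \<and>
     (\<forall>i<5. \<exists>us. distinct us \<and> set us = X i \<and>
        closed_nbhd V E (us ! 0) = X ((i + 4) mod 5) \<union> X i \<union> X ((i + 1) mod 5) \<and>
        (\<forall>j. j + 1 < length us \<longrightarrow> closed_nbhd V E (us ! (j + 1)) \<subseteq> closed_nbhd V E (us ! j)) \<and>
        X i \<subseteq> closed_nbhd V E (last us))"

definition five_ring :: "'a set \<Rightarrow> ('a \<Rightarrow> 'a \<Rightarrow> bool) \<Rightarrow> bool" where
  "five_ring V E \<longleftrightarrow> (\<exists>X. five_ring_partition V E X)"

definition five_crown :: "'a set \<Rightarrow> ('a \<Rightarrow> 'a \<Rightarrow> bool) \<Rightarrow> bool" where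
  "five_crown V E \<longleftrightarrow> (\<exists>X. five_ring_partition V E X \<and>
     (\<exists>i<5. complete_to E (X ((i + 4) mod 5)) (X ((i + 3) mod 5)) \<and>
            complete_to E (X ((i + 1) mod 5)) (X ((i + 2) mod 5))))"

end

theory Submission
  imports Defs
begin

text \<open>
  Index every vertex of a 5-ring by its class. Each class is a clique, edges only join equal or
  cyclically consecutive classes, the closed neighbourhoods inside a class are nested, and each
  class contains a vertex adjacent to everything in its own and the two neighbouring classes.
  Consecutive vertices of an induced cycle of length at least 4 have private neighbours, so
  their neighbourhoods are incomparable and all vertices of the cycle lie in distinct classes;
  hence such a cycle has at most five vertices and, when it has four, would be a 4-cycle in
  the 5-cycle of classes. For the 3-pentagon and (using the two complete pairs of the crown)
  for 2P3, the class indices of an induced copy violate a finite condition on residues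
  mod 5. The remaining properties come from the dominating vertices and from the fact that
  every class is nonempty.
\<close>

section \<open>Adjacency of indices modulo 5\<close>

lemma less_5_cases:
  fixes i :: nat
  assumes "i < 5"
  obtains "i = 0" | "i = 1" | "i = 2" | "i = 3" | "i = 4"
  using assms by (auto simp: less_Suc_eq numeral_eq_Suc)

definition near_mod5 :: "nat \<Rightarrow> nat \<Rightarrow> bool" where
  "near_mod5 i j \<longleftrightarrow> i = j \<or> j = (i + 1) mod 5 \<or> i = (j + 1) mod 5"

lemma near_mod5_sym: "near_mod5 i j \<longleftrightarrow> near_mod5 j i"
  by (auto simp: near_mod5_def)

lemma near_mod5_iff:
  "i < 5 \<Longrightarrow> j < 5 \<Longrightarrow> near_mod5 i j \<longleftrightarrow> j = (i + 4) mod 5 \<or> j = i \<or> j = (i + 1) mod 5"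
  by (elim less_5_cases; simp add: near_mod5_def)

lemma near_mod5_pred_succ:
  assumes "i < 5"
  shows "near_mod5 ((i + 4) mod 5) i" "near_mod5 ((i + 1) mod 5) i"
    and "(i + 4) mod 5 \<noteq> i" "(i + 1) mod 5 \<noteq> i"
    and "\<not> near_mod5 ((i + 4) mod 5) ((i + 1) mod 5)"
  using assms by (elim less_5_cases; simp add: near_mod5_def)+

lemma not_near_mod5_add_2: "i < 5 \<Longrightarrow> \<not> near_mod5 i ((i + 2) mod 5)"
  by (elim less_5_cases; simp add: near_mod5_def)

lemma near_mod5_table:
  "i < 5 \<Longrightarrow> j < 5 \<Longrightarrow> near_mod5 i j \<longleftrightarrow>
     (i = 0 \<and> (j = 4 \<or> j = 0 \<or> j = 1)) \<or> (i = 1 \<and> (j = 0 \<or> j = 1 \<or> j = 2)) \<or>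
     (i = 2 \<and> (j = 1 \<or> j = 2 \<or> j = 3)) \<or> (i = 3 \<and> (j = 2 \<or> j = 3 \<or> j = 4)) \<or>
     (i = 4 \<and> (j = 3 \<or> j = 4 \<or> j = 0))"
  by (elim less_5_cases; simp add: near_mod5_def)

lemma near_mod5_shift:
  "i < 5 \<Longrightarrow> j < 5 \<Longrightarrow> k < 5 \<Longrightarrow>
     near_mod5 ((i + 5 - k) mod 5) ((j + 5 - k) mod 5) \<longleftrightarrow> near_mod5 i j"
  by (elim less_5_cases; simp add: near_mod5_def)

lemma shift_mod5_eq_iff:
  "i < 5 \<Longrightarrow> m < 5 \<Longrightarrow> k < 5 \<Longrightarrow> (i + 5 - k) mod 5 = (m::nat) \<longleftrightarrow> i = (k + m) mod 5"
  by (elim less_5_cases; simp)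

lemma near_mod5_common_far:
  assumes "i < 5" "j < 5" "near_mod5 i j"
  shows "\<exists>r<5. \<not> near_mod5 i r \<and> \<not> near_mod5 j r"
proof -
  have "\<exists>r\<in>{0,1,2,3,4}. \<not> near_mod5 i r \<and> \<not> near_mod5 j r"
    using assms by (elim less_5_cases; simp add: near_mod5_def)
  then obtain r where "r \<in> {0, 1, 2, 3, 4}" "\<not> near_mod5 i r \<and> \<not> near_mod5 j r"
    by blast
  then show ?thesis by (intro exI[of _ r]) auto
qed

lemma no_4cycle_near_mod5:
  assumes "a < 5" "b < 5" "c < 5" "d < 5"
    and "near_mod5 a b" "near_mod5 b c" "near_mod5 c d" "near_mod5 d a"
    and "distinct [a, b, c, d]"
  shows False
  using assms by (elim less_5_cases; simp add: near_mod5_table; elim disjE; simp add: near_mod5_table)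

lemma no_3pentagon_near_mod5:
  assumes "a < 5" "b1 < 5" "b2 < 5" "b3 < 5" "c1 < 5" "c2 < 5" "c3 < 5"
    and "near_mod5 a b1" "near_mod5 a b2" "near_mod5 a b3"
    and "near_mod5 b1 c1" "near_mod5 b2 c2" "near_mod5 b3 c3"
    and "distinct [b1, b2, b3]" "a \<notin> {c1, c2, c3}"
    and "c1 \<notin> {b2, b3}" "c2 \<notin> {b1, b3}" "c3 \<notin> {b1, b2}"
  shows False
proof -
  let ?S = "{(a + 4) mod 5, (a + 1) mod 5}"
  have S: "(a + 4) mod 5 \<noteq> a" "(a + 1) mod 5 \<noteq> a" "(a + 4) mod 5 \<noteq> (a + 1) mod 5"
    using \<open>a < 5\<close> by (elim less_5_cases; simp)+
  have "b1 \<in> insert a ?S" "b2 \<in> insert a ?S" "b3 \<in> insert a ?S"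
    using assms near_mod5_iff by auto
  then have bs: "{b1, b2, b3} = insert a ?S"
    using S \<open>distinct [b1, b2, b3]\<close> by auto
  then have others: "?S = {b1, b2, b3} - {a}"
    using S by auto
  have c: "c \<in> {b1, b2, b3} - {a}" if "near_mod5 a c" "c < 5" "c \<noteq> a" for c
    using that \<open>a < 5\<close> near_mod5_iff others by auto
  have "a \<in> {b1, b2, b3}"
    using bs by blast
  then show False
    using c[of c1] c[of c2] c[of c3] assms by (elim insertE emptyE) auto
qed

text \<open>
  The possible positions of two distinct nonadjacent vertices of a 5-crown whose classes at
  positions 1, 2 and at positions 3, 4 are complete to each other.
\<close>
definition crown_apart :: "nat \<Rightarrow> nat \<Rightarrow> bool" where
  "crown_apart i j \<longleftrightarrow> i \<noteq> j \<and> {i, j} \<noteq> {1, 2} \<and> {i, j} \<noteq> {3, 4}"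

lemma crown_apart_iff:
  "crown_apart i j \<longleftrightarrow> i \<noteq> j \<and> \<not> (i = 1 \<and> j = 2) \<and> \<not> (i = 2 \<and> j = 1) \<and>
     \<not> (i = 3 \<and> j = 4) \<and> \<not> (i = 4 \<and> j = 3)"
  by (auto simp: crown_apart_def doubleton_eq_iff)

text \<open>
  The positions of the two paths form disjoint arcs of two or three consecutive residues. Then
  all edges of the 5-cycle of residues except at most two, which share a vertex, join positions
  that must be apart; so one of them is 1, 2 or 3, 4.
\<close>
lemma no_2P3_crown_apart:
  assumes "a < 5" "b < 5" "c < 5" "d < 5" "e < 5" "f < 5"
    and "near_mod5 b a" "near_mod5 b c" "near_mod5 e d" "near_mod5 e f"
    and "crown_apart a c" "crown_apart d f"
    and "crown_apart a d" "crown_apart a e" "crown_apart a f"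
    and "crown_apart b d" "crown_apart b e" "crown_apart b f"
    and "crown_apart c d" "crown_apart c e" "crown_apart c f"
  shows False
  by (insert assms) (erule less_5_cases[of b]; erule less_5_cases[of e]; simp only: near_mod5_table;
      simp; elim disjE; simp add: crown_apart_iff)

section \<open>Graphs with a 5-ring partition\<close>

lemma cycle_E_private_neighbours:
  assumes "4 \<le> k" "i < k"
  defines "j \<equiv> (i + 1) mod k" and "a \<equiv> (i + k - 1) mod k" and "b \<equiv> ((i + 1) mod k + 1) mod k"
  shows "j < k" "a < k" "b < k" "a \<noteq> j" "b \<noteq> i"
    and "cycle_E k i a" "\<not> cycle_E k j a" "cycle_E k j b" "\<not> cycle_E k i b"
proof -
  have succ: "(x + 1) mod k = (if x + 1 = k then 0 else x + 1)" if "x < k" for x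
    using that by auto
  have j: "j = (if i + 1 = k then 0 else i + 1)"
    unfolding j_def using succ assms by auto
  have a: "a = (if i = 0 then k - 1 else i - 1)"
    unfolding a_def using assms by (cases "i = 0") (auto simp: mod_if)
  have b: "b = (if j + 1 = k then 0 else j + 1)"
    unfolding b_def j_def[symmetric] using succ j assms by auto
  show "j < k" "a < k" "b < k" "a \<noteq> j" "b \<noteq> i"
    and "cycle_E k i a" "\<not> cycle_E k j a" "cycle_E k j b" "\<not> cycle_E k i b"
    unfolding cycle_E_def using assms(1,2) j a b succ[of a] succ[of j] succ[of b] succ[of i]
    by (auto split: if_splits)
qed

lemma decreasing_chain_nth:
  assumes "\<forall>j. j + 1 < length xs \<longrightarrow> N (xs ! (j + 1)) \<subseteq> N (xs ! j)" "p \<le> q" "q < length xs"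
  shows "N (xs ! q) \<subseteq> N (xs ! p)"
proof -
  have "sorted_wrt (\<supseteq>) (map N xs)"
    using assms(1) by (simp add: sorted_wrt_iff_nth_Suc_transp transp_on_def)
  then show ?thesis
    using assms(2,3) by (cases "p = q") (auto simp: sorted_wrt_iff_nth_less)
qed

locale five_ring_graph =
  fixes V :: "'a set" and E :: "'a \<Rightarrow> 'a \<Rightarrow> bool" and X :: "nat \<Rightarrow> 'a set"
  assumes graph: "graph V E" and ring_partition: "five_ring_partition V E X"
begin

abbreviation nbhd :: "'a \<Rightarrow> 'a set" where
  "nbhd \<equiv> closed_nbhd V E"

abbreviation band :: "nat \<Rightarrow> 'a set" where
  "band i \<equiv> X ((i + 4) mod 5) \<union> X i \<union> X ((i + 1) mod 5)"

definition cls :: "'a \<Rightarrow> nat" where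
  "cls v = (THE i. i < 5 \<and> v \<in> X i)"

lemma E_sym: "E x y \<Longrightarrow> E y x"
  and E_in_V: "E x y \<Longrightarrow> x \<in> V" "E x y \<Longrightarrow> y \<in> V"
  using graph unfolding graph_def by blast+

lemma X_nonempty: "i < 5 \<Longrightarrow> X i \<noteq> {}"
  and X_disjoint: "i < 5 \<Longrightarrow> j < 5 \<Longrightarrow> i \<noteq> j \<Longrightarrow> X i \<inter> X j = {}"
  and Union_X: "(\<Union>i<5. X i) = V"
  using ring_partition unfolding five_ring_partition_def by blast+

lemma X_subset_V: "i < 5 \<Longrightarrow> X i \<subseteq> V"
  using Union_X by blast

lemma cls_eqI: "i < 5 \<Longrightarrow> v \<in> X i \<Longrightarrow> cls v = i"
  unfolding cls_def by (rule the_equality) (use X_disjoint in blast)+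

lemma cls_less: "v \<in> V \<Longrightarrow> cls v < 5"
  and in_X_cls: "v \<in> V \<Longrightarrow> v \<in> X (cls v)"
proof -
  assume "v \<in> V"
  then obtain i where "i < 5" "v \<in> X i"
    using Union_X by blast
  then show "cls v < 5" "v \<in> X (cls v)"
    using cls_eqI by auto
qed

lemma class_ordering:
  assumes "i < 5"
  obtains us where "set us = X i" "us \<noteq> []" "nbhd (us ! 0) = band i" "X i \<subseteq> nbhd (last us)"
    "\<And>p q. p \<le> q \<Longrightarrow> q < length us \<Longrightarrow> nbhd (us ! q) \<subseteq> nbhd (us ! p)"
proof -
  have "\<forall>i<5. \<exists>us. distinct us \<and> set us = X i \<and> nbhd (us ! 0) = band i \<and>
      (\<forall>j. j + 1 < length us \<longrightarrow> nbhd (us ! (j + 1)) \<subseteq> nbhd (us ! j)) \<and> X i \<subseteq> nbhd (last us)"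
    using ring_partition unfolding five_ring_partition_def by (elim conjE)
  then obtain us where us: "set us = X i" "nbhd (us ! 0) = band i" "X i \<subseteq> nbhd (last us)"
    "\<forall>j. j + 1 < length us \<longrightarrow> nbhd (us ! (j + 1)) \<subseteq> nbhd (us ! j)"
    using assms by blast
  show thesis
  proof (rule that)
    show "us \<noteq> []"
      using us(1) X_nonempty[OF assms] by auto
    show "nbhd (us ! q) \<subseteq> nbhd (us ! p)" if "p \<le> q" "q < length us" for p q
      using decreasing_chain_nth[OF us(4) that] .
  qed (use us in auto)
qed

lemma class_subset_nbhd_subset_band:
  assumes "i < 5" "v \<in> X i"
  shows "X i \<subseteq> nbhd v" "nbhd v \<subseteq> band i"
proof -
  obtain us where us: "set us = X i" "us \<noteq> []" "nbhd (us ! 0) = band i" "X i \<subseteq> nbhd (last us)"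
    "\<And>p q. p \<le> q \<Longrightarrow> q < length us \<Longrightarrow> nbhd (us ! q) \<subseteq> nbhd (us ! p)"
    using class_ordering[OF assms(1)] by metis
  obtain p where p: "p < length us" "v = us ! p"
    using us(1) assms(2) by (metis in_set_conv_nth)
  have "nbhd (last us) \<subseteq> nbhd v"
    using us(2,5) p by (simp add: last_conv_nth)
  then show "X i \<subseteq> nbhd v"
    using us(4) by blast
  show "nbhd v \<subseteq> band i"
    using us(3) us(5)[of 0 p] p by simp
qed

lemma class_nbhds_nested:
  assumes "i < 5" "x \<in> X i" "y \<in> X i"
  shows "nbhd x \<subseteq> nbhd y \<or> nbhd y \<subseteq> nbhd x"
proof -
  obtain us where us: "set us = X i" "us \<noteq> []" "nbhd (us ! 0) = band i" "X i \<subseteq> nbhd (last us)"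
    "\<And>p q. p \<le> q \<Longrightarrow> q < length us \<Longrightarrow> nbhd (us ! q) \<subseteq> nbhd (us ! p)"
    using class_ordering[OF assms(1)] by metis
  obtain p q where "p < length us" "x = us ! p" "q < length us" "y = us ! q"
    using us(1) assms(2,3) by (metis in_set_conv_nth)
  then show ?thesis
    using us(5)[of p q] us(5)[of q p] by (cases "p \<le> q") auto
qed

lemma adj_near: "E x y \<Longrightarrow> near_mod5 (cls x) (cls y)"
proof -
  assume "E x y"
  then have xy: "x \<in> V" "y \<in> V" "y \<in> nbhd x"
    using E_in_V unfolding closed_nbhd_def by auto
  then have "y \<in> band (cls x)"
    using class_subset_nbhd_subset_band(2) cls_less in_X_cls by blast
  then have "cls y \<in> {(cls x + 4) mod 5, cls x, (cls x + 1) mod 5}"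
    using cls_eqI[of "(cls x + 4) mod 5" y] cls_eqI[of "cls x" y] cls_eqI[of "(cls x + 1) mod 5" y]
      cls_less[OF xy(1)] by auto
  then show ?thesis
    using near_mod5_iff cls_less xy by auto
qed

lemma same_cls_adj:
  assumes "x \<in> V" "y \<in> V" "x \<noteq> y" "cls x = cls y"
  shows "E x y"
proof -
  have "y \<in> X (cls x)"
    using in_X_cls assms by simp
  then have "y \<in> nbhd x"
    using class_subset_nbhd_subset_band(1)[OF cls_less in_X_cls] assms(1) by blast
  then show ?thesis
    using assms(3) unfolding closed_nbhd_def by auto
qed

lemma private_neighbours_cls_neq:
  assumes "E x a" "\<not> E y a" "a \<noteq> y" "E y b" "\<not> E x b" "b \<noteq> x"
  shows "cls x \<noteq> cls y"
proof
  assume same: "cls x = cls y"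
  have V: "x \<in> V" "y \<in> V"
    using assms(1,4) E_in_V by auto
  have "nbhd x \<subseteq> nbhd y \<or> nbhd y \<subseteq> nbhd x"
    using class_nbhds_nested[OF cls_less[OF V(1)] in_X_cls[OF V(1)]] in_X_cls[OF V(2)] same
    by simp
  moreover have "a \<in> nbhd x - nbhd y" "b \<in> nbhd y - nbhd x"
    using assms E_in_V unfolding closed_nbhd_def by auto
  ultimately show False
    by blast
qed

lemma dominating_vertex:
  assumes "i < 5"
  shows "\<exists>u\<in>V. cls u = i \<and> (\<forall>v\<in>V. near_mod5 i (cls v) \<longrightarrow> v = u \<or> E u v)"
proof -
  obtain us where us: "set us = X i" "us \<noteq> []" "nbhd (us ! 0) = band i" "X i \<subseteq> nbhd (last us)"
    "\<And>p q. p \<le> q \<Longrightarrow> q < length us \<Longrightarrow> nbhd (us ! q) \<subseteq> nbhd (us ! p)"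
    using class_ordering[OF assms] by metis
  let ?u = "us ! 0"
  have u: "?u \<in> X i"
    using us(1,2) by (metis length_greater_0_conv nth_mem)
  have "v = ?u \<or> E ?u v" if "v \<in> V" "near_mod5 i (cls v)" for v
  proof -
    have "cls v \<in> {(i + 4) mod 5, i, (i + 1) mod 5}"
      using that near_mod5_iff[OF assms cls_less[OF that(1)]] by auto
    then have "v \<in> band i"
      using in_X_cls[OF that(1)] by auto
    then show ?thesis
      using us(3) unfolding closed_nbhd_def by auto
  qed
  then show ?thesis
    using u X_subset_V[OF assms] cls_eqI[OF assms u] by blast
qed

lemma class_member: "i < 5 \<Longrightarrow> \<exists>w\<in>V. cls w = i"
  using X_nonempty X_subset_V cls_eqI by blast

lemma induced_copy_classes:
  assumes "contains_induced V E W F"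
  obtains c where "\<And>x. x \<in> W \<Longrightarrow> c x < 5"
    "\<And>x y. x \<in> W \<Longrightarrow> y \<in> W \<Longrightarrow> F x y \<Longrightarrow> near_mod5 (c x) (c y)"
    "\<And>x y. x \<in> W \<Longrightarrow> y \<in> W \<Longrightarrow> x \<noteq> y \<Longrightarrow> \<not> F x y \<Longrightarrow> c x \<noteq> c y"
proof -
  obtain f where f: "inj_on f W" "f ` W \<subseteq> V" "\<forall>x\<in>W. \<forall>y\<in>W. F x y \<longleftrightarrow> E (f x) (f y)"
    using assms unfolding contains_induced_def by blast
  show thesis
  proof (rule that[of "cls \<circ> f"])
    show "(cls \<circ> f) x < 5" if "x \<in> W" for x
      using cls_less f(2) that by auto
    show "near_mod5 ((cls \<circ> f) x) ((cls \<circ> f) y)" if "x \<in> W" "y \<in> W" "F x y" for x y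
      using adj_near f(3) that by simp
    show "(cls \<circ> f) x \<noteq> (cls \<circ> f) y" if "x \<in> W" "y \<in> W" "x \<noteq> y" "\<not> F x y" for x y
      using same_cls_adj[of "f x" "f y"] f inj_onD[OF f(1) _ that(1,2)] that by auto
  qed
qed

lemma induced_cycle_cls_inj:
  assumes "4 \<le> k" "inj_on f {0..<k}" "f ` {0..<k} \<subseteq> V"
    and cyc: "\<forall>i\<in>{0..<k}. \<forall>j\<in>{0..<k}. cycle_E k i j \<longleftrightarrow> E (f i) (f j)"
  shows "inj_on (cls \<circ> f) {0..<k}"
proof -
  have consecutive: "cls (f i) \<noteq> cls (f ((i + 1) mod k))" if "i < k" for i
  proof (rule private_neighbours_cls_neq)
    note c = cycle_E_private_neighbours[OF assms(1) that]
    show "E (f i) (f ((i + k - 1) mod k))" "\<not> E (f ((i + 1) mod k)) (f ((i + k - 1) mod k))"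
      "E (f ((i + 1) mod k)) (f (((i + 1) mod k + 1) mod k))"
      "\<not> E (f i) (f (((i + 1) mod k + 1) mod k))"
      using c cyc that by auto
    show "f ((i + k - 1) mod k) \<noteq> f ((i + 1) mod k)" "f (((i + 1) mod k + 1) mod k) \<noteq> f i"
      using c assms(2) that by (auto dest: inj_onD)
  qed
  show ?thesis
  proof (rule inj_onI, rule ccontr)
    fix i j
    assume ij: "i \<in> {0..<k}" "j \<in> {0..<k}" "(cls \<circ> f) i = (cls \<circ> f) j" "i \<noteq> j"
    then have "E (f i) (f j)"
      using same_cls_adj[of "f i" "f j"] assms(3) inj_onD[OF assms(2), of i j]
      by (auto simp: image_subset_iff)
    then have "j = (i + 1) mod k \<or> i = (j + 1) mod k"
      using cyc ij unfolding cycle_E_def by auto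
    then show False
      using consecutive ij by force
  qed
qed

lemma no_induced_long_cycle:
  assumes "6 \<le> k"
  shows "\<not> contains_induced V E (cycle_V k) (cycle_E k)"
proof
  assume "contains_induced V E (cycle_V k) (cycle_E k)"
  then obtain f where f: "inj_on f {0..<k}" "f ` {0..<k} \<subseteq> V"
    "\<forall>i\<in>{0..<k}. \<forall>j\<in>{0..<k}. cycle_E k i j \<longleftrightarrow> E (f i) (f j)"
    unfolding contains_induced_def cycle_V_def by blast
  have "inj_on (cls \<circ> f) {0..<k}"
    using induced_cycle_cls_inj f assms by simp
  moreover have "(cls \<circ> f) ` {0..<k} \<subseteq> {0..<5}"
    using cls_less f(2) by auto
  ultimately have "card {0..<k} \<le> card {0..<5::nat}"
    using card_inj_on_le by blast
  then show False
    using assms by simp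
qed

lemma no_induced_C4: "\<not> contains_induced V E (cycle_V 4) (cycle_E 4)"
proof
  assume "contains_induced V E (cycle_V 4) (cycle_E 4)"
  then obtain f where f: "inj_on f {0..<4}" "f ` {0..<4} \<subseteq> V"
    "\<forall>i\<in>{0..<4}. \<forall>j\<in>{0..<4}. cycle_E 4 i j \<longleftrightarrow> E (f i) (f j)"
    unfolding contains_induced_def cycle_V_def by blast
  have inj: "inj_on (cls \<circ> f) {0..<4}"
    using induced_cycle_cls_inj f by simp
  have neq: "cls (f i) \<noteq> cls (f j)" if "i < 4" "j < 4" "i \<noteq> j" for i j
    using inj_onD[OF inj, of i j] that by auto
  have near: "near_mod5 (cls (f i)) (cls (f j))" if "cycle_E 4 i j" "i < 4" "j < 4" for i j
    using adj_near f(3) that by simp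
  have less: "cls (f i) < 5" if "i < 4" for i
    using cls_less f(2) that by (auto simp: image_subset_iff)
  show False
    by (rule no_4cycle_near_mod5[of "cls (f 0)" "cls (f 1)" "cls (f 2)" "cls (f 3)"])
      (auto simp: cycle_E_def neq intro!: less near)
qed

lemma no_induced_3pentagon: "\<not> contains_induced V E pent3_V pent3_E"
proof
  assume "contains_induced V E pent3_V pent3_E"
  then show False
  proof (rule induced_copy_classes)
    fix c
    assume "\<And>x. x \<in> pent3_V \<Longrightarrow> c x < 5"
      "\<And>x y. x \<in> pent3_V \<Longrightarrow> y \<in> pent3_V \<Longrightarrow> pent3_E x y \<Longrightarrow> near_mod5 (c x) (c y)"
      "\<And>x y. x \<in> pent3_V \<Longrightarrow> y \<in> pent3_V \<Longrightarrow> x \<noteq> y \<Longrightarrow> \<not> pent3_E x y \<Longrightarrow> c x \<noteq> c y"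
    then show False
      by (intro no_3pentagon_near_mod5[of "c 0" "c 1" "c 2" "c 3" "c 4" "c 5" "c 6"])
        (simp_all add: pent3_V_def pent3_E_def doubleton_eq_iff)
  qed
qed

lemma not_universal: "v \<in> V \<Longrightarrow> \<not> universal V E v"
proof
  assume v: "v \<in> V" "universal V E v"
  obtain w where w: "w \<in> V" "cls w = (cls v + 2) mod 5"
    using class_member[of "(cls v + 2) mod 5"] by auto
  have "\<not> near_mod5 (cls v) (cls w)"
    using not_near_mod5_add_2 cls_less v(1) w(2) by simp
  moreover have "w \<noteq> v"
    using calculation near_mod5_def by auto
  ultimately show False
    using v w adj_near unfolding universal_def by blast
qed

lemma not_simplicial: "v \<in> V \<Longrightarrow> \<not> simplicial V E v"
proof
  assume v: "v \<in> V" "simplicial V E v"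
  note ring = near_mod5_pred_succ[OF cls_less[OF v(1)]]
  obtain u\<^sub>1 where u\<^sub>1: "u\<^sub>1 \<in> V" "cls u\<^sub>1 = (cls v + 4) mod 5"
      "\<forall>w\<in>V. near_mod5 (cls u\<^sub>1) (cls w) \<longrightarrow> w = u\<^sub>1 \<or> E u\<^sub>1 w"
    using dominating_vertex[of "(cls v + 4) mod 5"] by auto
  obtain u\<^sub>2 where u\<^sub>2: "u\<^sub>2 \<in> V" "cls u\<^sub>2 = (cls v + 1) mod 5"
      "\<forall>w\<in>V. near_mod5 (cls u\<^sub>2) (cls w) \<longrightarrow> w = u\<^sub>2 \<or> E u\<^sub>2 w"
    using dominating_vertex[of "(cls v + 1) mod 5"] by auto
  have "E v u\<^sub>1" "E v u\<^sub>2"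
    using u\<^sub>1 u\<^sub>2 v(1) ring E_sym by metis+
  moreover have "\<not> E u\<^sub>1 u\<^sub>2"
    using u\<^sub>1(2) u\<^sub>2(2) ring(5) adj_near by metis
  moreover have "u\<^sub>1 \<noteq> u\<^sub>2"
    using u\<^sub>1(2) u\<^sub>2(2) ring(5) near_mod5_def by auto
  ultimately show False
    using v u\<^sub>1(1) u\<^sub>2(1) unfolding simplicial_def by blast
qed

lemma far_classes_complement:
  assumes "x \<in> V" "y \<in> V" "\<not> near_mod5 (cls x) (cls y)"
  shows "complement V E x y"
proof -
  have "x \<noteq> y"
    using assms(3) near_mod5_def by auto
  moreover have "\<not> E x y"
    using assms(3) adj_near by blast
  ultimately show ?thesis
    using assms(1,2) unfolding complement_def by blast
qed

lemma complement_connected: "anticonnected V E"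
  unfolding anticonnected_def connected_graph_def
proof (intro ballI)
  fix x y assume xy: "x \<in> V" "y \<in> V"
  let ?R = "\<lambda>a b. a \<in> V \<and> b \<in> V \<and> complement V E a b"
  show "?R\<^sup>*\<^sup>* x y"
  proof (cases "near_mod5 (cls x) (cls y)")
    case False
    then show ?thesis
      using far_classes_complement xy by blast
  next
    case True
    then obtain r where r: "r < 5" "\<not> near_mod5 (cls x) r" "\<not> near_mod5 r (cls y)"
      using near_mod5_common_far cls_less xy near_mod5_sym by metis
    obtain z where z: "z \<in> V" "cls z = r"
      using class_member[OF r(1)] by blast
    have "?R x z" "?R z y"
      using far_classes_complement xy z r by auto
    then show ?thesis
      by (rule converse_rtranclp_into_rtranclp[OF _ r_into_rtranclp])
  qed
qed

end

section \<open>5-crowns\<close>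

locale five_crown_graph = five_ring_graph +
  fixes k :: nat
  assumes k_less: "k < 5"
    and left_complete: "complete_to E (X ((k + 4) mod 5)) (X ((k + 3) mod 5))"
    and right_complete: "complete_to E (X ((k + 1) mod 5)) (X ((k + 2) mod 5))"
begin

text \<open>Class indices shifted so that the index \<open>i*\<close> of the crown becomes 0.\<close>
definition pos :: "'a \<Rightarrow> nat" where
  "pos v = (cls v + 5 - k) mod 5"

lemma pos_less: "pos v < 5"
  unfolding pos_def by simp

lemma pos_eq_iff:
  assumes "v \<in> V" "m < 5"
  shows "pos v = m \<longleftrightarrow> v \<in> X ((k + m) mod 5)"
proof -
  have "pos v = m \<longleftrightarrow> cls v = (k + m) mod 5"
    unfolding pos_def using shift_mod5_eq_iff[OF cls_less[OF assms(1)] assms(2) k_less] .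
  also have "\<dots> \<longleftrightarrow> v \<in> X ((k + m) mod 5)"
    using in_X_cls[OF assms(1)] cls_eqI[of "(k + m) mod 5" v] by auto
  finally show ?thesis .
qed

lemma adj_pos_near: "E x y \<Longrightarrow> near_mod5 (pos x) (pos y)"
  unfolding pos_def using near_mod5_shift[OF cls_less cls_less k_less] adj_near E_in_V by simp

lemma nonadj_crown_apart:
  assumes "x \<in> V" "y \<in> V" "x \<noteq> y" "\<not> E x y"
  shows "crown_apart (pos x) (pos y)"
  unfolding crown_apart_iff
proof (intro conjI notI)
  assume "pos x = pos y"
  then have "x \<in> X ((k + pos y) mod 5)" "y \<in> X ((k + pos y) mod 5)"
    using pos_eq_iff[OF assms(1) pos_less] pos_eq_iff[OF assms(2) pos_less] by auto
  then have "cls x = cls y"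
    using cls_eqI[of "(k + pos y) mod 5"] by simp
  then show False
    using same_cls_adj assms by blast
next
  have "E a b" if "pos a = 1" "pos b = 2" "a \<in> V" "b \<in> V" for a b
    using right_complete pos_eq_iff[of a 1] pos_eq_iff[of b 2] that unfolding complete_to_def by simp
  moreover have "E a b" if "pos a = 4" "pos b = 3" "a \<in> V" "b \<in> V" for a b
    using left_complete pos_eq_iff[of a 4] pos_eq_iff[of b 3] that unfolding complete_to_def by simp
  ultimately show "pos x = 1 \<and> pos y = 2 \<Longrightarrow> False" "pos x = 2 \<and> pos y = 1 \<Longrightarrow> False"
    "pos x = 3 \<and> pos y = 4 \<Longrightarrow> False" "pos x = 4 \<and> pos y = 3 \<Longrightarrow> False"
    using assms E_sym by blast+
qed

lemma induced_copy_positions: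
  assumes "contains_induced V E W F"
  obtains c where "\<And>x. x \<in> W \<Longrightarrow> c x < 5"
    "\<And>x y. x \<in> W \<Longrightarrow> y \<in> W \<Longrightarrow> F x y \<Longrightarrow> near_mod5 (c x) (c y)"
    "\<And>x y. x \<in> W \<Longrightarrow> y \<in> W \<Longrightarrow> x \<noteq> y \<Longrightarrow> \<not> F x y \<Longrightarrow> crown_apart (c x) (c y)"
proof -
  obtain f where f: "inj_on f W" "f ` W \<subseteq> V" "\<forall>x\<in>W. \<forall>y\<in>W. F x y \<longleftrightarrow> E (f x) (f y)"
    using assms unfolding contains_induced_def by blast
  show thesis
  proof (rule that[of "pos \<circ> f"])
    show "(pos \<circ> f) x < 5" if "x \<in> W" for x
      using pos_less by simp
    show "near_mod5 ((pos \<circ> f) x) ((pos \<circ> f) y)" if "x \<in> W" "y \<in> W" "F x y" for x y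
      using adj_pos_near f(3) that by simp
    show "crown_apart ((pos \<circ> f) x) ((pos \<circ> f) y)" if "x \<in> W" "y \<in> W" "x \<noteq> y" "\<not> F x y" for x y
      using nonadj_crown_apart[of "f x" "f y"] f inj_onD[OF f(1) _ that(1,2)] that by auto
  qed
qed

lemma no_induced_2P3: "\<not> contains_induced V E twoP3_V twoP3_E"
proof
  assume "contains_induced V E twoP3_V twoP3_E"
  then show False
  proof (rule induced_copy_positions)
    fix c
    assume "\<And>x. x \<in> twoP3_V \<Longrightarrow> c x < 5"
      "\<And>x y. x \<in> twoP3_V \<Longrightarrow> y \<in> twoP3_V \<Longrightarrow> twoP3_E x y \<Longrightarrow> near_mod5 (c x) (c y)"
      "\<And>x y. x \<in> twoP3_V \<Longrightarrow> y \<in> twoP3_V \<Longrightarrow> x \<noteq> y \<Longrightarrow> \<not> twoP3_E x y \<Longrightarrow>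
         crown_apart (c x) (c y)"
    then show False
      by (intro no_2P3_crown_apart[of "c 0" "c 1" "c 2" "c 3" "c 4" "c 5"])
        (simp_all add: twoP3_V_def twoP3_E_def doubleton_eq_iff)
  qed
qed

end

theorem proposition6p7:
  fixes V :: "'a set" and E :: "'a \<Rightarrow> 'a \<Rightarrow> bool"
  assumes "graph V E" and "five_crown V E"
  shows "H_free V E twoP3_V twoP3_E \<and> H_free V E (cycle_V 4) (cycle_E 4) \<and>
         H_free V E (cycle_V 6) (cycle_E 6) \<and> H_free V E (cycle_V 7) (cycle_E 7) \<and>
         H_free V E pent3_V pent3_E \<and>
         anticonnected V E \<and>
         (\<forall>v\<in>V. \<not> universal V E v) \<and> (\<forall>v\<in>V. \<not> simplicial V E v)"
proof -
  obtain X k where "five_ring_partition V E X" "k < 5"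
    "complete_to E (X ((k + 4) mod 5)) (X ((k + 3) mod 5))"
    "complete_to E (X ((k + 1) mod 5)) (X ((k + 2) mod 5))"
    using assms(2) unfolding five_crown_def by blast
  then interpret five_crown_graph V E X k
    using assms(1) by unfold_locales
  show ?thesis
    unfolding H_free_def
    using no_induced_2P3 no_induced_C4 no_induced_long_cycle[of 6] no_induced_long_cycle[of 7]
      no_induced_3pentagon complement_connected not_universal not_simplicial
    by simp
qed

end
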